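(* Let $\Omega\subset\mathbb R^2$ be a domain, and let $h\in H_\rho$ be a boundary element whose realization $s_h$ is a single point. Then for every sequence $\{x_m\}\subset\Omega$ with $\rho_{(F,V)}(x_m,h)\to0$, one has $|x_m-s_h|\to0$ as $m\to\infty$.
   Context: The conformal capacity of a condenser is $\mathrm{cap}(F_0,F_1;\Omega)=\inf\int_\Omega|\nabla v|^2dx$, where the infimum is over nonnegative continuous $v$ with square integrable weak gradient, $v=0$ near $F_0$, and $v\ge1$ near $F_1$. Fix a continuum $F\subset\Omega$ and a domain $V$ with $F\subset V\subset\overline V\subset\Omega$, $\overline V$ compact, and $\partial V$ a quasiconformal image of the unit circle. The conformal capacitary metric is $$\rho_{(F,V)}(x,y)=\inf_{l(x,y)}\big\{\mathrm{cap}^{1/2}(F,l\setminus V;\Omega)+\mathrm{cap}^{1/2}(\partial\Omega,l\cap V;\Omega)\big\},$$ where the infimum is over rectifiable curves $l$ in $\Omega$ joining $x$ and $y$. Let $\widetilde\Omega_\rho$ be the completion of $(\Omega,\rho_{(F,V)})$ and $H_\rho=\widetilde\Omega_\rho\setminus\Omega$. For $h\in H_\rho$, let $D(h,\varepsilon)$ denote the $\rho$-ball of radius $\varepsilon$ about $h$ in $\widetilde\Omega_\rho$. The realization (impression) of $h$ is $s_h=\bigcap_{\varepsilon>0}\overline{D(h,\varepsilon)\cap\Omega}\subset\overline{\mathbb R^2}$, where the closure is Euclidean. *)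

theory Defs
  imports "HOL-Analysis.Analysis"
begin

type_synonym plane = "real^2"

text \<open>The extended plane \<open>R^2 \<union> {\<infinity>}\<close> is modelled as \<open>plane option\<close>, with \<open>None\<close> the point at infinity.\<close>

definition ext_closure :: "plane set \<Rightarrow> plane option set" where
  "ext_closure S = Some ` closure S \<union> (if bounded S then {} else {None})"

definition ext_frontier :: "plane set \<Rightarrow> plane option set" where
  "ext_frontier \<Omega> = Some ` frontier \<Omega> \<union> (if bounded \<Omega> then {} else {None})"

text \<open>\<open>U\<close> (open in the plane) together with the point at infinity if required
  is a neighbourhood in the extended plane of the set \<open>S\<close>.\<close>
definition ext_nbhd :: "plane set \<Rightarrow> plane option set \<Rightarrow> bool" where
  "ext_nbhd U S \<longleftrightarrow> open U \<and> {x. Some x \<in> S} \<subseteq> U \<and>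
     (None \<in> S \<longrightarrow> (\<exists>R. {x. norm x > R} \<subseteq> U))"

definition test_fn :: "plane set \<Rightarrow> (plane \<Rightarrow> real) \<Rightarrow> bool" where
  "test_fn \<Omega> \<phi> \<longleftrightarrow> (\<forall>x. \<phi> differentiable at x) \<and>
     (\<forall>e. continuous_on UNIV (\<lambda>x. frechet_derivative \<phi> (at x) e)) \<and>
     compact (closure {x. \<phi> x \<noteq> 0}) \<and> closure {x. \<phi> x \<noteq> 0} \<subseteq> \<Omega>"

definition weak_gradient :: "plane set \<Rightarrow> (plane \<Rightarrow> real) \<Rightarrow> (plane \<Rightarrow> plane) \<Rightarrow> bool" where
  "weak_gradient \<Omega> v g \<longleftrightarrow>
     (\<forall>K. compact K \<and> K \<subseteq> \<Omega> \<longrightarrow> g absolutely_integrable_on K) \<and>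
     (\<forall>\<phi> e. test_fn \<Omega> \<phi> \<longrightarrow>
        integral \<Omega> (\<lambda>x. v x * frechet_derivative \<phi> (at x) e)
          = - integral \<Omega> (\<lambda>x. (g x \<bullet> e) * \<phi> x))"

definition cap_admissible :: "plane set \<Rightarrow> plane option set \<Rightarrow> plane option set
     \<Rightarrow> (plane \<Rightarrow> real) \<Rightarrow> (plane \<Rightarrow> plane) \<Rightarrow> bool" where
  "cap_admissible \<Omega> F0 F1 v g \<longleftrightarrow>
     continuous_on \<Omega> v \<and> (\<forall>x\<in>\<Omega>. 0 \<le> v x) \<and>
     weak_gradient \<Omega> v g \<and> (\<lambda>x. (norm (g x))\<^sup>2) integrable_on \<Omega> \<and>
     (\<exists>U. ext_nbhd U F0 \<and> (\<forall>x\<in>U \<inter> \<Omega>. v x = 0)) \<and>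
     (\<exists>U. ext_nbhd U F1 \<and> (\<forall>x\<in>U \<inter> \<Omega>. 1 \<le> v x))"

definition cap :: "plane set \<Rightarrow> plane option set \<Rightarrow> plane option set \<Rightarrow> real" where
  "cap \<Omega> F0 F1 = Inf {integral \<Omega> (\<lambda>x. (norm (g x))\<^sup>2) | v g. cap_admissible \<Omega> F0 F1 v g}"

definition rectifiable_path :: "(real \<Rightarrow> plane) \<Rightarrow> bool" where
  "rectifiable_path l \<longleftrightarrow> path l \<and>
     bdd_above {(\<Sum>i<n. dist (l (t i)) (l (t (Suc i)))) | n t.
                  t 0 = 0 \<and> t n = 1 \<and> (\<forall>i<n. t i \<le> t (Suc i))}"

definition cc_metric :: "plane set \<Rightarrow> plane set \<Rightarrow> plane set \<Rightarrow> plane \<Rightarrow> plane \<Rightarrow> real" where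
  "cc_metric F V \<Omega> x y = Inf {sqrt (cap \<Omega> (Some ` F) (Some ` (path_image l - V)))
        + sqrt (cap \<Omega> (ext_frontier \<Omega>) (Some ` (path_image l \<inter> V))) | l.
        rectifiable_path l \<and> path_image l \<subseteq> \<Omega> \<and> pathstart l = x \<and> pathfinish l = y}"

definition quasiconformal :: "(plane \<Rightarrow> plane) \<Rightarrow> bool" where
  "quasiconformal f \<longleftrightarrow> (\<exists>f'. homeomorphism UNIV UNIV f f') \<and>
     (\<exists>H. \<forall>x. eventually (\<lambda>r. Sup ((\<lambda>y. dist (f y) (f x)) ` sphere x r)
                 \<le> H * Inf ((\<lambda>y. dist (f y) (f x)) ` sphere x r)) (at_right 0))"

definition qc_circle :: "plane set \<Rightarrow> bool" where
  "qc_circle C \<longleftrightarrow> (\<exists>f. quasiconformal f \<and> C = f ` sphere 0 1)"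

text \<open>Completion of \<open>(\<Omega>, \<rho>)\<close>: a point of \<open>H_\<rho>\<close> is represented by a \<open>\<rho>\<close>-Cauchy sequence in
  \<open>\<Omega>\<close> which does not \<open>\<rho>\<close>-converge to a point of \<open>\<Omega>\<close>.\<close>
definition boundary_element :: "plane set \<Rightarrow> (plane \<Rightarrow> plane \<Rightarrow> real) \<Rightarrow> (nat \<Rightarrow> plane) \<Rightarrow> bool" where
  "boundary_element \<Omega> \<rho> y \<longleftrightarrow> (\<forall>n. y n \<in> \<Omega>) \<and>
     (\<forall>\<epsilon>>0. \<exists>N. \<forall>m\<ge>N. \<forall>n\<ge>N. \<rho> (y m) (y n) < \<epsilon>) \<and>
     \<not> (\<exists>x\<in>\<Omega>. (\<lambda>n. \<rho> x (y n)) \<longlonglongrightarrow> 0)"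

definition completion_dist :: "(plane \<Rightarrow> plane \<Rightarrow> real) \<Rightarrow> (nat \<Rightarrow> plane) \<Rightarrow> plane \<Rightarrow> real" where
  "completion_dist \<rho> y x = lim (\<lambda>n. \<rho> x (y n))"

definition ball_trace :: "plane set \<Rightarrow> (plane \<Rightarrow> plane \<Rightarrow> real) \<Rightarrow> (nat \<Rightarrow> plane) \<Rightarrow> real \<Rightarrow> plane set" where
  "ball_trace \<Omega> \<rho> y \<epsilon> = {x\<in>\<Omega>. completion_dist \<rho> y x < \<epsilon>}"

definition realization :: "plane set \<Rightarrow> (plane \<Rightarrow> plane \<Rightarrow> real) \<Rightarrow> (nat \<Rightarrow> plane) \<Rightarrow> plane option set" where
  "realization \<Omega> \<rho> y = (\<Inter>\<epsilon>\<in>{0<..}. ext_closure (ball_trace \<Omega> \<rho> y \<epsilon>))"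

end

theory Submission
  imports Defs
begin

text \<open>The traces \<open>D(h,\<epsilon>) \<inter> \<Omega>\<close> decrease with \<open>\<epsilon>\<close>, and since \<open>\<infinity> \<notin> s_h\<close> one of them is bounded.
  Their closures then form a chain of compact sets whose intersection is \<open>s_h = {p}\<close>, so by
  compactness every Euclidean ball about \<open>p\<close> already contains one of them.  A sequence that
  \<open>\<rho>\<close>-converges to \<open>h\<close> eventually enters each trace, hence each ball about \<open>p\<close>.
  No property of the capacitary metric is needed beyond this.\<close>

lemma shrinking_closures_subset_ball:
  fixes B :: "real \<Rightarrow> 'a::heine_borel set"
  assumes "mono B" and "0 < d0" and "bounded (B d0)"
    and "(\<Inter>d\<in>{0<..}. closure (B d)) \<subseteq> {p}" and "0 < r"
  shows "\<exists>d>0. closure (B d) \<subseteq> ball p r"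
proof (rule ccontr)
  assume "\<not> ?thesis"
  then have nonempty: "closure (B d) - ball p r \<noteq> {}" if "0 < d" for d
    using that by blast
  let ?\<F> = "(\<lambda>d. closure (B d) - ball p r) ` {0<..}"
  have "\<Inter>?\<F> \<noteq> {}"
  proof (rule bounded_closed_chain)
    show "closure (B d0) - ball p r \<in> ?\<F>"
      using \<open>0 < d0\<close> by blast
    show "bounded (closure (B d0) - ball p r)"
      using \<open>bounded (B d0)\<close> by (meson Diff_subset bounded_closure bounded_subset)
    show "\<And>S. S \<in> ?\<F> \<Longrightarrow> closed S"
      by (auto intro: closed_Diff)
    show "{} \<notin> ?\<F>"
      using nonempty by force
    have "closure (B d) \<subseteq> closure (B e) \<or> closure (B e) \<subseteq> closure (B d)" for d e
      using \<open>mono B\<close> by (meson closure_mono le_cases monoD)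
    then show "\<And>S T. S \<in> ?\<F> \<and> T \<in> ?\<F> \<Longrightarrow> S \<subseteq> T \<or> T \<subseteq> S"
      by blast
  qed
  then obtain z where "z \<in> (\<Inter>d\<in>{0<..}. closure (B d))" and "z \<notin> ball p r"
    using \<open>0 < d0\<close> by blast
  with assms(4) \<open>0 < r\<close> show False
    by auto
qed

lemma tendsto_shrinking_closures:
  fixes B :: "real \<Rightarrow> 'a::heine_borel set"
  assumes "mono B" and "0 < d0" and "bounded (B d0)"
    and "(\<Inter>d\<in>{0<..}. closure (B d)) \<subseteq> {p}"
    and eventually_in: "\<And>d. 0 < d \<Longrightarrow> eventually (\<lambda>n. f n \<in> B d) F"
  shows "(f \<longlongrightarrow> p) F"
proof (rule tendstoI)
  fix r :: real
  assume "0 < r"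
  then obtain d where "0 < d" and "closure (B d) \<subseteq> ball p r"
    using shrinking_closures_subset_ball assms(1-4) by blast
  then have "eventually (\<lambda>n. f n \<in> ball p r) F"
    using eventually_in[OF \<open>0 < d\<close>] closure_subset by (elim eventually_mono) blast
  then show "eventually (\<lambda>n. dist (f n) p < r) F"
    by (rule eventually_mono) (simp add: dist_commute)
qed

lemma mono_ball_trace: "mono (ball_trace \<Omega> \<rho> y)"
  by (auto simp: mono_def ball_trace_def)

lemma None_in_realization_iff:
  "None \<in> realization \<Omega> \<rho> y \<longleftrightarrow> (\<forall>d>0. \<not> bounded (ball_trace \<Omega> \<rho> y d))"
  by (auto simp: realization_def ext_closure_def)

lemma Some_in_realization_iff:
  "Some z \<in> realization \<Omega> \<rho> y \<longleftrightarrow> z \<in> (\<Inter>d\<in>{0<..}. closure (ball_trace \<Omega> \<rho> y d))"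
  by (auto simp: realization_def ext_closure_def)

lemma tendsto_realization_singleton:
  assumes "realization \<Omega> \<rho> y = {Some p}" and "\<forall>m. x m \<in> \<Omega>"
    and "(\<lambda>m. completion_dist \<rho> y (x m)) \<longlonglongrightarrow> 0"
  shows "x \<longlonglongrightarrow> p"
proof -
  obtain d0 where "0 < d0" and "bounded (ball_trace \<Omega> \<rho> y d0)"
    using None_in_realization_iff[of \<Omega> \<rho> y] assms(1) by auto
  then show ?thesis
  proof (rule tendsto_shrinking_closures[OF mono_ball_trace])
    show "(\<Inter>d\<in>{0<..}. closure (ball_trace \<Omega> \<rho> y d)) \<subseteq> {p}"
      using Some_in_realization_iff[of _ \<Omega> \<rho> y] assms(1) by blast
    fix d :: real
    assume "0 < d"
    then have "eventually (\<lambda>m. completion_dist \<rho> y (x m) < d) sequentially"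
      using order_tendstoD(2)[OF assms(3)] by blast
    then show "eventually (\<lambda>m. x m \<in> ball_trace \<Omega> \<rho> y d) sequentially"
      by (rule eventually_mono) (simp add: ball_trace_def assms(2))
  qed
qed

theorem lemma2p14:
  fixes \<Omega> F V :: "plane set" and y x :: "nat \<Rightarrow> plane" and p :: plane
  assumes "open \<Omega>" and "connected \<Omega>" and "\<Omega> \<noteq> {}"
    and "compact F" and "connected F" and "F \<noteq> {}" and "F \<subseteq> \<Omega>"
    and "open V" and "connected V" and "F \<subseteq> V" and "closure V \<subseteq> \<Omega>"
    and "compact (closure V)" and "qc_circle (frontier V)"
    and "boundary_element \<Omega> (cc_metric F V \<Omega>) y"
    and "realization \<Omega> (cc_metric F V \<Omega>) y = {Some p}"
    and "\<forall>m. x m \<in> \<Omega>"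
    and "(\<lambda>m. completion_dist (cc_metric F V \<Omega>) y (x m)) \<longlonglongrightarrow> 0"
  shows "x \<longlonglongrightarrow> p"
  using tendsto_realization_singleton assms(15-17) by blast

end
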